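(* For every positive integer $n$, the number $Z(n)=\sum_{k=0}^{n-1}M_{k}(n)$ is an integer, where $M_k(n)=\frac{1+(-1)^{k}k!(n-k-1)!}{n}$.
   Context: For integers $n\geq 1$ and $0\leq k\leq n-1$, $M_{k}(n)=\frac{1+(-1)^{k}k!(n-k-1)!}{n}$ (a rational number), and $Z(n)=\sum_{k=0}^{n-1}M_{k}(n)$. *)

theory Defs
  imports Complex_Main
begin

definition M :: "nat \<Rightarrow> nat \<Rightarrow> rat" where
  "M k n = (1 + (-1) ^ k * fact k * fact (n - k - 1)) / of_nat n"

definition Z :: "nat \<Rightarrow> rat" where
  "Z n = (\<Sum>k<n. M k n)"

end

theory Submission
  imports Defs
begin

text \<open>
  Write \<open>S(n) = \<Sum>k<n. (-1)^k k! (n-1-k)!\<close>, so that \<open>Z(n) = 1 + S(n)/n\<close>.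
  Since \<open>k! (m-k)! + (k+1)! (m-k-1)! = (m+1) k! (m-k-1)!\<close>, the alternating sum
  telescopes: \<open>(n+1) S(n) = n! (1 - (-1)^n)\<close>. Hence \<open>S(n) = 0\<close> for even \<open>n\<close>, and for
  \<open>n = 2j+1\<close> we get \<open>(j+1) S(n) = n \<cdot> (n-1)!\<close>, where \<open>j+1\<close> divides \<open>(n-1)!\<close>.
\<close>

definition alt_fact_sum :: "nat \<Rightarrow> int" where
  "alt_fact_sum n = (\<Sum>k<n. (-1)^k * fact k * fact (n - Suc k))"

lemma fact_mult_fact_add_Suc:
  assumes "k < m"
  shows "fact k * fact (m - k) + fact (Suc k) * fact (m - Suc k)
           = (of_nat m + 1) * (fact k * fact (m - Suc k) :: 'a::{comm_semiring_1,semiring_char_0})"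
proof -
  have "m - k = Suc (m - Suc k)" using assms by simp
  then have "fact k * fact (m - k) + fact (Suc k) * fact (m - Suc k)
               = (of_nat (m - k) + of_nat (Suc k)) * (fact k * (fact (m - Suc k) :: 'a))"
    by (simp only: fact_Suc) (simp add: algebra_simps del: of_nat_Suc)
  also have "of_nat (m - k) + of_nat (Suc k) = (of_nat (m + 1) :: 'a)"
    using assms by (simp only: of_nat_add [symmetric]) simp
  finally show ?thesis by (simp add: add.commute)
qed

lemma Suc_mult_alt_fact_sum: "(int n + 1) * alt_fact_sum n = fact n * (1 - (-1)^n)"
proof -
  define f :: "nat \<Rightarrow> int" where "f k = (-1)^k * fact k * fact (n - k)" for k
  have "(int n + 1) * alt_fact_sum n = (\<Sum>k<n. (-1)^k * ((int n + 1) * (fact k * fact (n - Suc k))))"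
    unfolding alt_fact_sum_def by (simp add: sum_distrib_left algebra_simps)
  also have "\<dots> = (\<Sum>k<n. f k - f (Suc k))"
  proof (rule sum.cong)
    fix k assume "k \<in> {..<n}"
    then have "(int n + 1) * (fact k * fact (n - Suc k))
                 = fact k * fact (n - k) + fact (Suc k) * fact (n - Suc k)"
      by (intro fact_mult_fact_add_Suc [symmetric]) simp
    moreover have "f k - f (Suc k)
                     = (-1)^k * (fact k * fact (n - k) + fact (Suc k) * fact (n - Suc k))"
      unfolding f_def by (simp only: power_Suc) (simp add: algebra_simps del: fact_Suc)
    ultimately show "(-1)^k * ((int n + 1) * (fact k * fact (n - Suc k))) = f k - f (Suc k)"
      by simp
  qed simp
  also have "\<dots> = f 0 - f n"
    by (rule sum_lessThan_telescope')
  also have "\<dots> = fact n * (1 - (-1)^n)"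
    by (simp add: f_def algebra_simps)
  finally show ?thesis .
qed

lemma alt_fact_sum_even: "even n \<Longrightarrow> alt_fact_sum n = 0"
  using Suc_mult_alt_fact_sum[of n] by simp

lemma Suc_dvd_fact_double: "Suc j dvd fact (2 * j)"
  by (cases "j = 0") (simp_all add: dvd_fact)

lemma dvd_alt_fact_sum: "int n dvd alt_fact_sum n"
proof (cases "even n")
  case True
  then show ?thesis by (simp add: alt_fact_sum_even)
next
  case False
  then obtain j where n: "n = 2 * j + 1" by (blast elim: oddE)
  have "(int n + 1) * alt_fact_sum n = 2 * fact n"
    using Suc_mult_alt_fact_sum[of n] False by simp
  then have "(int j + 1) * alt_fact_sum n = int n * fact (2 * j)"
    using n by (simp add: algebra_simps)
  moreover obtain q where "fact (2 * j) = (int j + 1) * q"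
    using Suc_dvd_fact_double[of j] by (metis dvdE int_dvd_int_iff of_nat_Suc of_nat_fact add.commute)
  ultimately have "(int j + 1) * alt_fact_sum n = (int j + 1) * (int n * q)"
    by (simp add: algebra_simps)
  then show ?thesis by simp
qed

lemma Z_eq_alt_fact_sum:
  assumes "n \<ge> 1"
  shows "Z n = 1 + of_int (alt_fact_sum n) / of_nat n"
proof -
  have "Z n = (of_nat n + of_int (alt_fact_sum n)) / of_nat n"
    unfolding Z_def M_def alt_fact_sum_def
    by (simp add: sum_divide_distrib sum.distrib add_divide_distrib)
  then show ?thesis using assms by (simp add: add_divide_distrib)
qed

theorem theorem1:
  fixes n :: nat
  assumes "n \<ge> 1"
  shows "Z n \<in> \<int>"
proof -
  obtain q where "alt_fact_sum n = int n * q"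
    using dvd_alt_fact_sum by (blast elim: dvdE)
  then have "Z n = 1 + of_int q"
    using assms by (simp add: Z_eq_alt_fact_sum)
  then show ?thesis by simp
qed

end
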